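(* Let $X$ be a connected Hausdorff topological space and let $\mathbf{F}$ be an infinite-dimensional $1$-independent Banach space of continuous functions over $X$ such that every bounded linear operator on $\mathbf{F}$ is of the form $\lambda\,\mathrm{Id}+K$ with $\lambda\in\mathbb{C}$ and $K$ compact. Then every multiplier of $\mathbf{F}$ is a constant function.
   Context: A Banach space of continuous functions over $X$ is a linear subspace of the space $C(X)$ of continuous complex functions with a complete norm whose topology is stronger than the compact-open topology. It is $1$-independent if for each $x\in X$ some $f\in\mathbf{F}$ has $f(x)\ne0$. $\omega:X\to\mathbb{C}$ is a multiplier of $\mathbf{F}$ if $\omega f\in\mathbf{F}$ for all $f\in\mathbf{F}$ and $f\mapsto\omega f$ is bounded on $\mathbf{F}$. *)

theory Defs
  imports "HOL-Analysis.Analysis"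
begin

definition cfun_subspace :: "('a::topological_space \<Rightarrow> complex) set \<Rightarrow> bool" where
  "cfun_subspace F \<longleftrightarrow>
     (\<forall>f\<in>F. continuous_on UNIV f) \<and>
     (\<lambda>x. 0) \<in> F \<and>
     (\<forall>f\<in>F. \<forall>g\<in>F. (\<lambda>x. f x + g x) \<in> F) \<and>
     (\<forall>c::complex. \<forall>f\<in>F. (\<lambda>x. c * f x) \<in> F)"

definition is_norm_on :: "('a \<Rightarrow> complex) set \<Rightarrow> (('a \<Rightarrow> complex) \<Rightarrow> real) \<Rightarrow> bool" where
  "is_norm_on F N \<longleftrightarrow>
     (\<forall>f\<in>F. N f \<ge> 0) \<and>
     (\<forall>f\<in>F. N f = 0 \<longleftrightarrow> f = (\<lambda>x. 0)) \<and>
     (\<forall>c::complex. \<forall>f\<in>F. N (\<lambda>x. c * f x) = cmod c * N f) \<and>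
     (\<forall>f\<in>F. \<forall>g\<in>F. N (\<lambda>x. f x + g x) \<le> N f + N g)"

definition norm_complete :: "('a \<Rightarrow> complex) set \<Rightarrow> (('a \<Rightarrow> complex) \<Rightarrow> real) \<Rightarrow> bool" where
  "norm_complete F N \<longleftrightarrow>
     (\<forall>s::nat \<Rightarrow> ('a \<Rightarrow> complex). (\<forall>n. s n \<in> F) \<longrightarrow>
        (\<forall>e>0. \<exists>M. \<forall>m\<ge>M. \<forall>n\<ge>M. N (\<lambda>x. s m x - s n x) < e) \<longrightarrow>
        (\<exists>g\<in>F. (\<lambda>n. N (\<lambda>x. s n x - g x)) \<longlonglongrightarrow> 0))"

text \<open>The norm topology is stronger than the compact-open topology (= topology of uniform
  convergence on compact sets for complex-valued functions): the identity map from (F,N) to F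
  with the compact-open topology is continuous, i.e. (by linearity) continuous at 0.\<close>
definition stronger_than_compact_open ::
  "('a::topological_space \<Rightarrow> complex) set \<Rightarrow> (('a \<Rightarrow> complex) \<Rightarrow> real) \<Rightarrow> bool" where
  "stronger_than_compact_open F N \<longleftrightarrow>
     (\<forall>K. compact K \<longrightarrow> (\<forall>e>0. \<exists>d>0. \<forall>f\<in>F. N f < d \<longrightarrow> (\<forall>x\<in>K. cmod (f x) < e)))"

definition banach_space_of_cfuns ::
  "('a::topological_space \<Rightarrow> complex) set \<Rightarrow> (('a \<Rightarrow> complex) \<Rightarrow> real) \<Rightarrow> bool" where
  "banach_space_of_cfuns F N \<longleftrightarrow>
     cfun_subspace F \<and> is_norm_on F N \<and> norm_complete F N \<and> stronger_than_compact_open F N"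

definition one_independent :: "('a \<Rightarrow> complex) set \<Rightarrow> bool" where
  "one_independent F \<longleftrightarrow> (\<forall>x. \<exists>f\<in>F. f x \<noteq> 0)"

definition cfun_span :: "('a \<Rightarrow> complex) set \<Rightarrow> ('a \<Rightarrow> complex) set" where
  "cfun_span S = {h. \<exists>c. h = (\<lambda>x. \<Sum>g\<in>S. c g * g x)}"

definition infinite_dimensional :: "('a \<Rightarrow> complex) set \<Rightarrow> bool" where
  "infinite_dimensional F \<longleftrightarrow> (\<forall>S. finite S \<and> S \<subseteq> F \<longrightarrow> \<not> F \<subseteq> cfun_span S)"

definition linear_op_on ::
  "('a \<Rightarrow> complex) set \<Rightarrow> (('a \<Rightarrow> complex) \<Rightarrow> ('a \<Rightarrow> complex)) \<Rightarrow> bool" where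
  "linear_op_on F T \<longleftrightarrow>
     (\<forall>f\<in>F. T f \<in> F) \<and>
     (\<forall>f\<in>F. \<forall>g\<in>F. T (\<lambda>x. f x + g x) = (\<lambda>x. T f x + T g x)) \<and>
     (\<forall>c::complex. \<forall>f\<in>F. T (\<lambda>x. c * f x) = (\<lambda>x. c * T f x))"

definition bounded_op_on ::
  "('a \<Rightarrow> complex) set \<Rightarrow> (('a \<Rightarrow> complex) \<Rightarrow> real) \<Rightarrow> (('a \<Rightarrow> complex) \<Rightarrow> ('a \<Rightarrow> complex)) \<Rightarrow> bool" where
  "bounded_op_on F N T \<longleftrightarrow> linear_op_on F T \<and> (\<exists>C. \<forall>f\<in>F. N (T f) \<le> C * N f)"

text \<open>Compact operator: linear, and the image of the unit ball is relatively compact in (F,N),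
  i.e. every sequence in the unit ball has a subsequence whose image converges in F.\<close>
definition compact_op_on ::
  "('a \<Rightarrow> complex) set \<Rightarrow> (('a \<Rightarrow> complex) \<Rightarrow> real) \<Rightarrow> (('a \<Rightarrow> complex) \<Rightarrow> ('a \<Rightarrow> complex)) \<Rightarrow> bool" where
  "compact_op_on F N K \<longleftrightarrow> linear_op_on F K \<and>
     (\<forall>s::nat \<Rightarrow> ('a \<Rightarrow> complex). (\<forall>n. s n \<in> F \<and> N (s n) \<le> 1) \<longrightarrow>
        (\<exists>r g. strict_mono r \<and> g \<in> F \<and> (\<lambda>n. N (\<lambda>x. K (s (r n)) x - g x)) \<longlonglongrightarrow> 0))"

definition multiplier ::
  "('a \<Rightarrow> complex) set \<Rightarrow> (('a \<Rightarrow> complex) \<Rightarrow> real) \<Rightarrow> ('a \<Rightarrow> complex) \<Rightarrow> bool" where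
  "multiplier F N \<omega> \<longleftrightarrow> (\<forall>f\<in>F. (\<lambda>x. \<omega> x * f x) \<in> F) \<and>
     (\<exists>C. \<forall>f\<in>F. N (\<lambda>x. \<omega> x * f x) \<le> C * N f)"

end

(*
  Write M_omega = lam Id + K with K compact. On F the operator K is multiplication by
  psi = omega - lam, so it suffices to show that a multiplier psi whose multiplication
  operator is compact is constant on a connected space.

  Every nonzero value mu = psi x0 is an eigenvalue of M_psi. If M_psi - mu is not bounded
  below, normalised approximate eigenvectors have a subsequence along which M_psi converges,
  and the limit is an eigenvector (identified pointwise). If M_psi - mu is bounded below, the
  ranges of its powers form a strictly decreasing chain of subspaces (evaluation at x0 keeps
  (psi - mu)^n f0 away from the next range), and Riesz's lemma produces a bounded sequence
  whose images under M_psi are uniformly separated, contradicting compactness.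

  Eigenvectors for distinct eigenvalues have disjoint supports, so images under M_psi of
  eigenvectors tend pointwise to 0; hence there are only finitely many eigenvalues of modulus
  at least eps > 0. Finally omega is continuous (1-independence allows dividing omega f by f
  locally), so the range of psi is connected; if psi were not constant, a nonzero value of psi
  would be a limit point of the range, giving infinitely many eigenvalues bounded away from 0.
*)

theory Submission
  imports Defs
begin

lemma multiplier_bounded_op:
  "multiplier F N \<omega> \<Longrightarrow> bounded_op_on F N (\<lambda>f x. \<omega> x * f x)"
  unfolding multiplier_def bounded_op_on_def linear_op_on_def by (auto simp: algebra_simps)

lemma multiplier_continuous:
  fixes F :: "('a::topological_space \<Rightarrow> complex) set"
  assumes cont: "\<forall>f\<in>F. continuous_on UNIV f" and "one_independent F"
    and mult: "\<forall>f\<in>F. (\<lambda>x. \<omega> x * f x) \<in> F"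
  shows "continuous_on UNIV \<omega>"
proof -
  have "continuous_on {y. f y \<noteq> 0} \<omega>" if "f \<in> F" for f
  proof -
    have "continuous_on {y. f y \<noteq> 0} (\<lambda>y. \<omega> y * f y / f y)"
      using cont mult that by (intro continuous_on_divide) (auto intro: continuous_on_subset)
    then show ?thesis by (rule continuous_on_cong[THEN iffD1, rotated 2]) auto
  qed
  moreover have "open {y. f y \<noteq> 0}" if "f \<in> F" for f
    using cont that by (intro open_Collect_neq) auto
  moreover have "(\<Union>f\<in>F. {y. f y \<noteq> 0}) = UNIV"
    using \<open>one_independent F\<close> unfolding one_independent_def by blast
  ultimately show ?thesis using continuous_on_open_UN[of F "\<lambda>f. {y. f y \<noteq> 0}" \<omega>] by simp
qed

lemma compact_op_on_subseq:
  assumes "compact_op_on F N K" "\<forall>n::nat. s n \<in> F \<and> N (s n) \<le> 1"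
  obtains r g where "strict_mono r" "g \<in> F" "(\<lambda>n. N (\<lambda>x. K (s (r n)) x - g x)) \<longlonglongrightarrow> 0"
  using assms unfolding compact_op_on_def by blast

locale cfun_normed_space =
  fixes F :: "('a::topological_space \<Rightarrow> complex) set" and N :: "('a \<Rightarrow> complex) \<Rightarrow> real"
  assumes subspace: "cfun_subspace F" and norm: "is_norm_on F N"
    and stronger: "stronger_than_compact_open F N"
begin

lemma zero_mem: "(\<lambda>x. 0) \<in> F"
  and add_mem: "f \<in> F \<Longrightarrow> g \<in> F \<Longrightarrow> (\<lambda>x. f x + g x) \<in> F"
  and scale_mem: "f \<in> F \<Longrightarrow> (\<lambda>x. c * f x) \<in> F"
  using subspace unfolding cfun_subspace_def by blast+

lemma diff_mem: "f \<in> F \<Longrightarrow> g \<in> F \<Longrightarrow> (\<lambda>x. f x - g x) \<in> F"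
  using add_mem[of f "\<lambda>x. (-1) * g x"] scale_mem[of g "-1"] by simp

lemma N_nonneg: "f \<in> F \<Longrightarrow> 0 \<le> N f"
  and N_eq_zero_iff: "f \<in> F \<Longrightarrow> N f = 0 \<longleftrightarrow> f = (\<lambda>x. 0)"
  and N_scale: "f \<in> F \<Longrightarrow> N (\<lambda>x. c * f x) = cmod c * N f"
  and N_triangle: "f \<in> F \<Longrightarrow> g \<in> F \<Longrightarrow> N (\<lambda>x. f x + g x) \<le> N f + N g"
  using norm unfolding is_norm_on_def by blast+

lemma N_minus_commute: "f \<in> F \<Longrightarrow> g \<in> F \<Longrightarrow> N (\<lambda>x. f x - g x) = N (\<lambda>x. g x - f x)"
  using N_scale[OF diff_mem, of f g "-1"] by (simp add: algebra_simps)

lemma N_triangle_diff: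
  "f \<in> F \<Longrightarrow> g \<in> F \<Longrightarrow> h \<in> F \<Longrightarrow>
     N (\<lambda>x. f x - h x) \<le> N (\<lambda>x. f x - g x) + N (\<lambda>x. g x - h x)"
  using N_triangle[OF diff_mem[of f g] diff_mem[of g h]] by simp

lemma unit_normalize:
  assumes "f \<in> F" "f \<noteq> (\<lambda>x. 0)"
  shows "(\<lambda>x. complex_of_real (inverse (N f)) * f x) \<in> F"
    and "N (\<lambda>x. complex_of_real (inverse (N f)) * f x) = 1"
proof -
  have "0 < N f" using assms N_nonneg N_eq_zero_iff by force
  then show "N (\<lambda>x. complex_of_real (inverse (N f)) * f x) = 1"
    using N_scale[OF assms(1)] by (simp add: norm_inverse)
qed (use assms scale_mem in blast)

lemma evaluation_bounded: "\<exists>E>0. \<forall>f\<in>F. cmod (f x) \<le> E * N f"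
proof -
  obtain d where "d > 0" and d: "\<And>f. f \<in> F \<Longrightarrow> N f < d \<Longrightarrow> cmod (f x) < 1"
    using stronger compact_sing[of x] zero_less_one
    unfolding stronger_than_compact_open_def by (metis singletonI)
  have "cmod (f x) \<le> (2 / d) * N f" if "f \<in> F" for f
  proof (cases "N f = 0")
    case True
    then have "f x = 0" using N_eq_zero_iff[OF that] by simp
    then show ?thesis using True by simp
  next
    case False
    then have "0 < N f" using N_nonneg[OF that] by linarith
    define r where "r = d / (2 * N f)"
    have "r > 0" using \<open>0 < N f\<close> \<open>d > 0\<close> by (simp add: r_def)
    moreover have "r * N f = d / 2" using \<open>0 < N f\<close> by (simp add: r_def)
    ultimately have "N (\<lambda>y. of_real r * f y) = d / 2"
      using N_scale[OF that, of "of_real r"] by simp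
    then have "cmod (of_real r * f x) < 1"
      using d[OF scale_mem[OF that, of "of_real r"]] \<open>d > 0\<close> by simp
    then have "r * cmod (f x) < 1" using \<open>r > 0\<close> by (simp add: norm_mult)
    then show ?thesis
      using \<open>0 < N f\<close> \<open>d > 0\<close> by (simp add: r_def field_simps)
  qed
  then show ?thesis using \<open>d > 0\<close> by (intro exI[of _ "2 / d"]) auto
qed

lemma pointwise_limit:
  assumes "\<And>n. s n \<in> F" "g \<in> F" "(\<lambda>n. N (\<lambda>x. s n x - g x)) \<longlonglongrightarrow> 0"
  shows "(\<lambda>n. s n x) \<longlonglongrightarrow> g x"
proof -
  obtain E where E: "\<forall>f\<in>F. cmod (f x) \<le> E * N f" using evaluation_bounded by blast
  have "\<forall>n. norm (s n x - g x) \<le> E * N (\<lambda>x. s n x - g x)"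
    using E[rule_format, OF diff_mem[OF assms(1,2)]] by simp
  moreover have "(\<lambda>n. E * N (\<lambda>x. s n x - g x)) \<longlonglongrightarrow> 0"
    using tendsto_mult_right_zero[OF assms(3)] by simp
  ultimately have "(\<lambda>n. s n x - g x) \<longlonglongrightarrow> 0"
    by (rule Lim_null_comparison[OF always_eventually])
  then show ?thesis by (simp add: LIM_zero_iff)
qed

lemma compact_op_on_cong:
  assumes "compact_op_on F N K" "\<And>f. f \<in> F \<Longrightarrow> K' f = K f"
  shows "compact_op_on F N K'"
  unfolding compact_op_on_def
proof (intro conjI allI impI)
  show "linear_op_on F K'"
    using assms add_mem scale_mem unfolding compact_op_on_def linear_op_on_def by simp
  fix s :: "nat \<Rightarrow> 'a \<Rightarrow> complex"
  assume s: "\<forall>n. s n \<in> F \<and> N (s n) \<le> 1"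
  obtain r g where "strict_mono r" "g \<in> F" "(\<lambda>n. N (\<lambda>x. K (s (r n)) x - g x)) \<longlonglongrightarrow> 0"
    using compact_op_on_subseq[OF assms(1) s] .
  then show "\<exists>r g. strict_mono r \<and> g \<in> F \<and> (\<lambda>n. N (\<lambda>x. K' (s (r n)) x - g x)) \<longlonglongrightarrow> 0"
    using assms(2) s by auto
qed

definition lin_subspace :: "('a \<Rightarrow> complex) set \<Rightarrow> bool" where
  "lin_subspace R \<longleftrightarrow> R \<subseteq> F \<and> (\<lambda>x. 0) \<in> R \<and>
     (\<forall>f\<in>R. \<forall>g\<in>R. (\<lambda>x. f x + g x) \<in> R) \<and> (\<forall>c. \<forall>f\<in>R. (\<lambda>x. c * f x) \<in> R)"

lemma
  assumes "lin_subspace R"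
  shows lin_subspace_subset: "R \<subseteq> F"
    and lin_subspace_zero: "(\<lambda>x. 0) \<in> R"
    and lin_subspace_add: "f \<in> R \<Longrightarrow> g \<in> R \<Longrightarrow> (\<lambda>x. f x + g x) \<in> R"
    and lin_subspace_scale: "f \<in> R \<Longrightarrow> (\<lambda>x. c * f x) \<in> R"
  using assms unfolding lin_subspace_def by blast+

lemma lin_subspace_diff:
  "lin_subspace R \<Longrightarrow> f \<in> R \<Longrightarrow> g \<in> R \<Longrightarrow> (\<lambda>x. f x - g x) \<in> R"
  using lin_subspace_add[of R f "\<lambda>x. (-1) * g x"] lin_subspace_scale[of R g "-1"] by simp

lemma riesz_lemma:
  assumes R: "lin_subspace R" and S: "lin_subspace S" "S \<subseteq> R"
    and w: "w \<in> R" and "D > 0" and gap: "\<And>h. h \<in> S \<Longrightarrow> D \<le> N (\<lambda>x. w x - h x)"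
  obtains u where "u \<in> R" "N u = 1" "\<And>k. k \<in> S \<Longrightarrow> 1/2 \<le> N (\<lambda>x. u x - k x)"
proof -
  define d where "d h = N (\<lambda>x. w x - h x)" for h
  define D0 where "D0 = (INF h\<in>S. d h)"
  have "S \<noteq> {}" using lin_subspace_zero[OF S(1)] by blast
  have "D \<le> D0" unfolding D0_def d_def by (rule cINF_greatest[OF \<open>S \<noteq> {}\<close> gap])
  have D0_le: "D0 \<le> d h" if "h \<in> S" for h
    unfolding D0_def by (rule cINF_lower[OF bdd_belowI2 that]) (use gap in \<open>auto simp: d_def\<close>)
  have "Inf (d ` S) < 2 * D0" using \<open>D > 0\<close> \<open>D \<le> D0\<close> unfolding D0_def by linarith
  then obtain h where h: "h \<in> S" "d h < 2 * D0"
    using cInf_lessD[of "d ` S"] \<open>S \<noteq> {}\<close> by blast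
  have "h \<in> R" using h(1) S(2) by blast
  then have "h \<in> F" "w \<in> F" using w lin_subspace_subset[OF R] by blast+
  have "d h > 0" using D0_le[OF h(1)] \<open>D > 0\<close> \<open>D \<le> D0\<close> by linarith
  define u where "u = (\<lambda>x. complex_of_real (inverse (d h)) * (w x - h x))"
  show thesis
  proof (rule that)
    show "u \<in> R" unfolding u_def by (intro lin_subspace_scale lin_subspace_diff R w \<open>h \<in> R\<close>)
    show "N u = 1"
      using N_scale[OF diff_mem[OF \<open>w \<in> F\<close> \<open>h \<in> F\<close>]] \<open>d h > 0\<close>
      by (simp add: u_def d_def norm_inverse)
    fix k assume "k \<in> S"
    then have h': "(\<lambda>x. h x + complex_of_real (d h) * k x) \<in> S"
      by (intro lin_subspace_add lin_subspace_scale S(1) h(1))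
    have "(\<lambda>x. u x - k x) = (\<lambda>x. complex_of_real (inverse (d h)) * (w x - (h x + d h * k x)))"
      using \<open>d h > 0\<close> by (auto simp: u_def field_simps)
    then have "N (\<lambda>x. u x - k x) = inverse (d h) * d (\<lambda>x. h x + d h * k x)"
      using N_scale[OF diff_mem[OF \<open>w \<in> F\<close>], of "\<lambda>x. h x + d h * k x"] h' S(2)
        lin_subspace_subset[OF R] \<open>d h > 0\<close>
      by (auto simp: d_def norm_inverse)
    then have "inverse (d h) * D0 \<le> N (\<lambda>x. u x - k x)"
      using D0_le[OF h'] \<open>d h > 0\<close> by (simp add: mult_left_mono)
    moreover have "1/2 < inverse (d h) * D0" using h(2) \<open>d h > 0\<close> by (simp add: field_simps)
    ultimately show "1/2 \<le> N (\<lambda>x. u x - k x)" by linarith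
  qed
qed

end

locale compact_multiplier = cfun_normed_space F N
  for F :: "('a::topological_space \<Rightarrow> complex) set" and N +
  fixes \<psi> :: "'a \<Rightarrow> complex"
  assumes compact_mult: "compact_op_on F N (\<lambda>f x. \<psi> x * f x)"
begin

lemma mult_mem: "f \<in> F \<Longrightarrow> (\<lambda>x. \<psi> x * f x) \<in> F"
  using compact_mult unfolding compact_op_on_def linear_op_on_def by blast

lemma shifted_mult_mem: "f \<in> F \<Longrightarrow> (\<lambda>x. (\<psi> x - \<mu>) * f x) \<in> F"
  using diff_mem[OF mult_mem scale_mem, of f f \<mu>] by (simp add: algebra_simps)

lemma shifted_power_mult_mem: "f \<in> F \<Longrightarrow> (\<lambda>x. (\<psi> x - \<mu>) ^ n * f x) \<in> F"
proof (induction n)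
  case (Suc n)
  then show ?case using shifted_mult_mem[OF Suc.IH[OF Suc.prems], of \<mu>] by (simp add: mult.assoc)
qed simp

lemma convergent_subseq:
  fixes s :: "nat \<Rightarrow> 'a \<Rightarrow> complex"
  assumes "\<And>n. s n \<in> F" "\<And>n. N (s n) \<le> 1"
  obtains r g where "strict_mono r" "g \<in> F" "(\<lambda>n. N (\<lambda>x. \<psi> x * s (r n) x - g x)) \<longlonglongrightarrow> 0"
  using compact_op_on_subseq[OF compact_mult, of s] assms by blast

lemma no_separated_images:
  fixes u :: "nat \<Rightarrow> 'a \<Rightarrow> complex"
  assumes u: "\<And>n. u n \<in> F" "\<And>n. N (u n) \<le> 1" and "\<delta> > 0"
    and sep: "\<And>m n. m < n \<Longrightarrow> \<delta> \<le> N (\<lambda>x. \<psi> x * u m x - \<psi> x * u n x)"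
  shows False
proof -
  obtain r g where r: "strict_mono r" and g: "g \<in> F"
    and lim: "(\<lambda>n. N (\<lambda>x. \<psi> x * u (r n) x - g x)) \<longlonglongrightarrow> 0"
    using convergent_subseq u by blast
  obtain M where M: "\<And>n. n \<ge> M \<Longrightarrow> N (\<lambda>x. \<psi> x * u (r n) x - g x) < \<delta> / 2"
    using order_tendstoD(2)[OF lim, of "\<delta> / 2"] \<open>\<delta> > 0\<close> by (auto simp: eventually_sequentially)
  have in_F: "(\<lambda>x. \<psi> x * u (r n) x) \<in> F" for n using mult_mem u(1) by blast
  have "\<delta> \<le> N (\<lambda>x. \<psi> x * u (r M) x - \<psi> x * u (r (Suc M)) x)"
    using sep strict_monoD[OF r, of M "Suc M"] by simp
  also have "\<dots> \<le> N (\<lambda>x. \<psi> x * u (r M) x - g x) + N (\<lambda>x. g x - \<psi> x * u (r (Suc M)) x)"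
    using N_triangle_diff[OF in_F g in_F] by simp
  also have "\<dots> < \<delta>"
    using M[of M] M[of "Suc M"] N_minus_commute[OF g in_F, of "Suc M"] by simp
  finally show False by simp
qed

definition eigenvalue :: "complex \<Rightarrow> bool" where
  "eigenvalue \<mu> \<longleftrightarrow> (\<exists>e\<in>F. N e = 1 \<and> (\<forall>x. \<psi> x * e x = \<mu> * e x))"

lemma approximate_eigenvalue_is_eigenvalue:
  assumes "\<mu> \<noteq> 0" and v: "\<And>k. v k \<in> F" "\<And>k. N (v k) = 1"
    and approx: "(\<lambda>k. N (\<lambda>x. (\<psi> x - \<mu>) * v k x)) \<longlonglongrightarrow> 0"
  shows "eigenvalue \<mu>"
proof -
  obtain r g where r: "strict_mono r" and g: "g \<in> F"
    and lim: "(\<lambda>k. N (\<lambda>x. \<psi> x * v (r k) x - g x)) \<longlonglongrightarrow> 0"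
    using convergent_subseq[of v] v by auto
  have approx_r: "(\<lambda>k. N (\<lambda>x. (\<psi> x - \<mu>) * v (r k) x)) \<longlonglongrightarrow> 0"
    using LIMSEQ_subseq_LIMSEQ[OF approx r] by (simp add: o_def)
  have bound: "N (\<lambda>x. \<mu> * v (r k) x - g x)
      \<le> N (\<lambda>x. (\<psi> x - \<mu>) * v (r k) x) + N (\<lambda>x. \<psi> x * v (r k) x - g x)" for k
  proof -
    have "N (\<lambda>x. \<mu> * v (r k) x - \<psi> x * v (r k) x) = N (\<lambda>x. (\<psi> x - \<mu>) * v (r k) x)"
      using N_minus_commute[OF scale_mem[OF v(1)] mult_mem[OF v(1)], of \<mu> "r k" "r k"]
      by (simp add: algebra_simps)
    then show ?thesis
      using N_triangle_diff[OF scale_mem[OF v(1)] mult_mem[OF v(1)] g, of \<mu> "r k" "r k"] by simp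
  qed
  have mu_lim: "(\<lambda>k. N (\<lambda>x. \<mu> * v (r k) x - g x)) \<longlonglongrightarrow> 0"
    by (rule tendsto_sandwich[OF _ _ tendsto_const tendsto_add_zero[OF approx_r lim]])
      (use bound N_nonneg[OF diff_mem[OF scale_mem[OF v(1)] g]] in auto)
  have "g \<noteq> (\<lambda>x. 0)"
  proof
    assume "g = (\<lambda>x. 0)"
    then have "(\<lambda>k. cmod \<mu>) \<longlonglongrightarrow> 0" using mu_lim N_scale[OF v(1)] v(2) by simp
    then show False using \<open>\<mu> \<noteq> 0\<close> by (simp add: LIMSEQ_const_iff)
  qed
  have eigen: "\<psi> x * g x = \<mu> * g x" for x
  proof -
    have "(\<lambda>k. \<mu> * v (r k) x) \<longlonglongrightarrow> g x"
      using pointwise_limit[OF scale_mem[OF v(1)] g mu_lim] .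
    then have "(\<lambda>k. \<psi> x * (\<mu> * v (r k) x)) \<longlonglongrightarrow> \<psi> x * g x" by (rule tendsto_mult_left)
    moreover have "(\<lambda>k. \<psi> x * v (r k) x) \<longlonglongrightarrow> g x"
      using pointwise_limit[OF mult_mem[OF v(1)] g lim] .
    then have "(\<lambda>k. \<psi> x * (\<mu> * v (r k) x)) \<longlonglongrightarrow> \<mu> * g x"
      using tendsto_mult_left[of _ _ _ \<mu>] by (simp add: mult.left_commute)
    ultimately show ?thesis by (rule LIMSEQ_unique)
  qed
  define e where "e = (\<lambda>x. complex_of_real (inverse (N g)) * g x)"
  have "e \<in> F" "N e = 1" unfolding e_def using unit_normalize[OF g \<open>g \<noteq> (\<lambda>x. 0)\<close>] by auto
  moreover have "\<psi> x * e x = \<mu> * e x" for x unfolding e_def by (metis eigen mult.left_commute)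
  ultimately show ?thesis unfolding eigenvalue_def by blast
qed

lemma eigenvalue_if_not_bounded_below:
  assumes "\<mu> \<noteq> 0" and unbounded: "\<not> (\<exists>c>0. \<forall>f\<in>F. c * N f \<le> N (\<lambda>x. (\<psi> x - \<mu>) * f x))"
  shows "eigenvalue \<mu>"
proof -
  have "\<exists>f\<in>F. N (\<lambda>x. (\<psi> x - \<mu>) * f x) < inverse (real (Suc k)) * N f" for k
    using unbounded by (meson not_le of_nat_0_less_iff positive_imp_inverse_positive zero_less_Suc)
  then obtain f where f: "\<And>k. f k \<in> F"
    and small: "\<And>k. N (\<lambda>x. (\<psi> x - \<mu>) * f k x) < inverse (real (Suc k)) * N (f k)"
    by metis
  have "f k \<noteq> (\<lambda>x. 0)" for k
    using small[of k] N_eq_zero_iff[OF zero_mem] by auto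
  then have "0 < N (f k)" for k using f N_nonneg N_eq_zero_iff by (metis order_less_le)
  define v where "v k = (\<lambda>x. complex_of_real (inverse (N (f k))) * f k x)" for k
  have v: "v k \<in> F" "N (v k) = 1" for k
    unfolding v_def using unit_normalize[OF f \<open>f k \<noteq> (\<lambda>x. 0)\<close>] by auto
  have "N (\<lambda>x. (\<psi> x - \<mu>) * v k x) = inverse (N (f k)) * N (\<lambda>x. (\<psi> x - \<mu>) * f k x)" for k
    using N_scale[OF shifted_mult_mem[OF f], of "complex_of_real (inverse (N (f k)))" \<mu> k]
      \<open>0 < N (f k)\<close> by (simp add: v_def mult.left_commute norm_inverse)
  then have "N (\<lambda>x. (\<psi> x - \<mu>) * v k x) \<le> inverse (real (Suc k))" for k
    using small[of k] \<open>0 < N (f k)\<close> by (simp add: field_simps)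
  then have "(\<lambda>k. N (\<lambda>x. (\<psi> x - \<mu>) * v k x)) \<longlonglongrightarrow> 0"
    by (intro tendsto_sandwich[OF _ _ tendsto_const LIMSEQ_inverse_real_of_nat] always_eventually
        allI N_nonneg shifted_mult_mem v)
  then show ?thesis using approximate_eigenvalue_is_eigenvalue \<open>\<mu> \<noteq> 0\<close> v by blast
qed

definition power_range :: "complex \<Rightarrow> nat \<Rightarrow> ('a \<Rightarrow> complex) set" where
  "power_range \<mu> n = (\<lambda>g x. (\<psi> x - \<mu>) ^ n * g x) ` F"

lemma power_rangeI: "g \<in> F \<Longrightarrow> (\<lambda>x. (\<psi> x - \<mu>) ^ n * g x) \<in> power_range \<mu> n"
  unfolding power_range_def by blast

lemma power_rangeE:
  assumes "h \<in> power_range \<mu> n"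
  obtains g where "g \<in> F" "h = (\<lambda>x. (\<psi> x - \<mu>) ^ n * g x)"
  using assms unfolding power_range_def by blast

lemma lin_subspace_power_range: "lin_subspace (power_range \<mu> n)"
  unfolding lin_subspace_def
proof (intro conjI ballI allI)
  show "power_range \<mu> n \<subseteq> F"
    using shifted_power_mult_mem by (auto elim: power_rangeE)
  show "(\<lambda>x. 0) \<in> power_range \<mu> n"
    using power_rangeI[OF zero_mem] by simp
  fix f g assume "f \<in> power_range \<mu> n"
  then obtain f' where f': "f' \<in> F" "f = (\<lambda>x. (\<psi> x - \<mu>) ^ n * f' x)" by (rule power_rangeE)
  show "(\<lambda>x. c * f x) \<in> power_range \<mu> n" for c
    using power_rangeI[OF scale_mem[OF f'(1)], of \<mu> n c] by (simp add: f'(2) mult.left_commute)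
  assume "g \<in> power_range \<mu> n"
  then obtain g' where g': "g' \<in> F" "g = (\<lambda>x. (\<psi> x - \<mu>) ^ n * g' x)" by (rule power_rangeE)
  show "(\<lambda>x. f x + g x) \<in> power_range \<mu> n"
    using power_rangeI[OF add_mem[OF f'(1) g'(1)], of \<mu> n] by (simp add: f'(2) g'(2) distrib_left)
qed

lemma power_range_antimono:
  assumes "m \<le> n"
  shows "power_range \<mu> n \<subseteq> power_range \<mu> m"
proof
  fix h assume "h \<in> power_range \<mu> n"
  then obtain g where g: "g \<in> F" "h = (\<lambda>x. (\<psi> x - \<mu>) ^ n * g x)" by (rule power_rangeE)
  have "z ^ m * z ^ (n - m) = z ^ n" for z :: complex
    using assms by (simp flip: power_add)
  then have "h = (\<lambda>x. (\<psi> x - \<mu>) ^ m * ((\<psi> x - \<mu>) ^ (n - m) * g x))"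
    by (simp add: g(2) mult.assoc[symmetric])
  then show "h \<in> power_range \<mu> m"
    using power_rangeI[OF shifted_power_mult_mem[OF g(1)]] by simp
qed

lemma mult_mem_power_range:
  assumes "h \<in> power_range \<mu> n"
  shows "(\<lambda>x. \<psi> x * h x) \<in> power_range \<mu> n"
proof -
  obtain g where g: "g \<in> F" "h = (\<lambda>x. (\<psi> x - \<mu>) ^ n * g x)" using assms by (rule power_rangeE)
  show ?thesis using power_rangeI[OF mult_mem[OF g(1)]] by (simp add: g(2) mult.left_commute)
qed

lemma shifted_mult_mem_power_range:
  assumes "h \<in> power_range \<mu> n"
  shows "(\<lambda>x. (\<psi> x - \<mu>) * h x) \<in> power_range \<mu> (Suc n)"
proof -
  obtain g where g: "g \<in> F" "h = (\<lambda>x. (\<psi> x - \<mu>) ^ n * g x)" using assms by (rule power_rangeE)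
  show ?thesis using power_rangeI[OF g(1), of \<mu> "Suc n"] by (simp add: g(2) mult.assoc)
qed

lemma power_range_separation:
  assumes "\<mu> \<noteq> 0" "m < n" and u: "u \<in> power_range \<mu> m" and v: "v \<in> power_range \<mu> n"
    and far: "\<And>k. k \<in> power_range \<mu> (Suc m) \<Longrightarrow> 1/2 \<le> N (\<lambda>x. u x - k x)"
  shows "cmod \<mu> / 2 \<le> N (\<lambda>x. \<psi> x * u x - \<psi> x * v x)"
proof -
  define k where "k = (\<lambda>x. inverse \<mu> * (\<psi> x * v x - (\<psi> x - \<mu>) * u x))"
  have "(\<lambda>x. \<psi> x * v x) \<in> power_range \<mu> (Suc m)"
    using mult_mem_power_range[OF v] power_range_antimono[of "Suc m" n \<mu>] \<open>m < n\<close> by auto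
  moreover have "(\<lambda>x. (\<psi> x - \<mu>) * u x) \<in> power_range \<mu> (Suc m)"
    using shifted_mult_mem_power_range[OF u] .
  ultimately have "k \<in> power_range \<mu> (Suc m)"
    unfolding k_def
    by (intro lin_subspace_scale[OF lin_subspace_power_range] lin_subspace_diff[OF lin_subspace_power_range])
  then have "k \<in> F" "u \<in> F"
    using u lin_subspace_subset[OF lin_subspace_power_range] by blast+
  have "(\<lambda>x. \<psi> x * u x - \<psi> x * v x) = (\<lambda>x. \<mu> * (u x - k x))"
    using \<open>\<mu> \<noteq> 0\<close> by (auto simp: k_def field_simps)
  then have "N (\<lambda>x. \<psi> x * u x - \<psi> x * v x) = cmod \<mu> * N (\<lambda>x. u x - k x)"
    using N_scale[OF diff_mem[OF \<open>u \<in> F\<close> \<open>k \<in> F\<close>]] by simp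
  then show ?thesis using mult_left_mono[OF far[OF \<open>k \<in> power_range \<mu> (Suc m)\<close>] norm_ge_zero[of \<mu>]] by simp
qed

lemma power_bounded_below:
  assumes "0 \<le> c" and below: "\<forall>f\<in>F. c * N f \<le> N (\<lambda>x. (\<psi> x - \<mu>) * f x)" and "f \<in> F"
  shows "c ^ n * N f \<le> N (\<lambda>x. (\<psi> x - \<mu>) ^ n * f x)"
proof (induction n)
  case (Suc n)
  have "c ^ Suc n * N f \<le> c * N (\<lambda>x. (\<psi> x - \<mu>) ^ n * f x)"
    using mult_left_mono[OF Suc.IH \<open>0 \<le> c\<close>] by (simp add: mult.assoc)
  also have "\<dots> \<le> N (\<lambda>x. (\<psi> x - \<mu>) * ((\<psi> x - \<mu>) ^ n * f x))"
    using below shifted_power_mult_mem[OF \<open>f \<in> F\<close>] by blast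
  finally show ?case by (simp add: mult.assoc)
qed simp

lemma power_range_gap:
  assumes "c > 0" and below: "\<forall>f\<in>F. c * N f \<le> N (\<lambda>x. (\<psi> x - \<psi> x0) * f x)"
    and f0: "f0 \<in> F" "f0 x0 \<noteq> 0"
  obtains D where "D > 0"
    "\<And>h. h \<in> power_range (\<psi> x0) (Suc n) \<Longrightarrow> D \<le> N (\<lambda>x. (\<psi> x - \<psi> x0) ^ n * f0 x - h x)"
proof -
  obtain E where "E > 0" and E: "\<forall>f\<in>F. cmod (f x0) \<le> E * N f" using evaluation_bounded by blast
  have "c ^ n * (cmod (f0 x0) / E) \<le> N (\<lambda>x. (\<psi> x - \<psi> x0) ^ n * f0 x - h x)"
    if h: "h \<in> power_range (\<psi> x0) (Suc n)" for h
  proof -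
    obtain g where g: "g \<in> F" "h = (\<lambda>x. (\<psi> x - \<psi> x0) ^ Suc n * g x)"
      using h by (rule power_rangeE)
    define q where "q = (\<lambda>x. f0 x - (\<psi> x - \<psi> x0) * g x)"
    have "q \<in> F" unfolding q_def by (intro diff_mem shifted_mult_mem f0(1) g(1))
    \<comment> \<open>q x0 = f0 x0, because \<psi> - \<psi> x0 vanishes at x0\<close>
    have "cmod (f0 x0) \<le> E * N q" using E \<open>q \<in> F\<close> by (auto simp: q_def)
    then have "c ^ n * (cmod (f0 x0) / E) \<le> c ^ n * N q"
      using \<open>c > 0\<close> \<open>E > 0\<close> by (intro mult_left_mono) (auto simp: field_simps)
    also have "\<dots> \<le> N (\<lambda>x. (\<psi> x - \<psi> x0) ^ n * q x)"
      using power_bounded_below[OF _ below \<open>q \<in> F\<close>] \<open>c > 0\<close> by simp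
    also have "(\<lambda>x. (\<psi> x - \<psi> x0) ^ n * q x) = (\<lambda>x. (\<psi> x - \<psi> x0) ^ n * f0 x - h x)"
      by (simp add: q_def g(2) algebra_simps)
    finally show ?thesis .
  qed
  moreover have "c ^ n * (cmod (f0 x0) / E) > 0" using \<open>c > 0\<close> \<open>E > 0\<close> f0(2) by simp
  ultimately show thesis using that by blast
qed

lemma not_bounded_below_at_value:
  assumes f0: "f0 \<in> F" "f0 x0 \<noteq> 0" and "\<psi> x0 \<noteq> 0"
  shows "\<not> (\<exists>c>0. \<forall>f\<in>F. c * N f \<le> N (\<lambda>x. (\<psi> x - \<psi> x0) * f x))"
proof
  assume "\<exists>c>0. \<forall>f\<in>F. c * N f \<le> N (\<lambda>x. (\<psi> x - \<psi> x0) * f x)"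
  then obtain c where c: "c > 0" "\<forall>f\<in>F. c * N f \<le> N (\<lambda>x. (\<psi> x - \<psi> x0) * f x)" by blast
  let ?R = "power_range (\<psi> x0)"
  have "\<forall>n. \<exists>u. u \<in> ?R n \<and> N u = 1 \<and> (\<forall>k\<in>?R (Suc n). 1/2 \<le> N (\<lambda>x. u x - k x))"
  proof
    fix n
    obtain D where "D > 0"
      and gap: "\<And>h. h \<in> ?R (Suc n) \<Longrightarrow> D \<le> N (\<lambda>x. (\<psi> x - \<psi> x0) ^ n * f0 x - h x)"
      using power_range_gap[OF c f0] by blast
    obtain u where "u \<in> ?R n" "N u = 1" "\<And>k. k \<in> ?R (Suc n) \<Longrightarrow> 1/2 \<le> N (\<lambda>x. u x - k x)"
      using riesz_lemma[OF lin_subspace_power_range lin_subspace_power_range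
          power_range_antimono[of n "Suc n", simplified] power_rangeI[OF f0(1)] \<open>D > 0\<close> gap]
      by blast
    then show "\<exists>u. u \<in> ?R n \<and> N u = 1 \<and> (\<forall>k\<in>?R (Suc n). 1/2 \<le> N (\<lambda>x. u x - k x))"
      by blast
  qed
  from choice[OF this] obtain u
    where "\<forall>n. u n \<in> ?R n \<and> N (u n) = 1 \<and> (\<forall>k\<in>?R (Suc n). 1/2 \<le> N (\<lambda>x. u n x - k x))"
    by (rule exE)
  then have u: "\<And>n. u n \<in> ?R n" "\<And>n. N (u n) = 1"
    and far: "\<And>n k. k \<in> ?R (Suc n) \<Longrightarrow> 1/2 \<le> N (\<lambda>x. u n x - k x)"
    by simp_all
  show False
  proof (rule no_separated_images[of u "cmod (\<psi> x0) / 2"])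
    show "u n \<in> F" for n using subsetD[OF lin_subspace_subset[OF lin_subspace_power_range] u(1)] .
    show "cmod (\<psi> x0) / 2 \<le> N (\<lambda>x. \<psi> x * u m x - \<psi> x * u n x)" if "m < n" for m n
      by (rule power_range_separation[OF \<open>\<psi> x0 \<noteq> 0\<close> that u(1) u(1) far])
  qed (use u(2) \<open>\<psi> x0 \<noteq> 0\<close> in auto)
qed

lemma value_is_eigenvalue:
  assumes "\<psi> x0 \<noteq> 0" "f0 \<in> F" "f0 x0 \<noteq> 0"
  shows "eigenvalue (\<psi> x0)"
  using eigenvalue_if_not_bounded_below not_bounded_below_at_value assms by blast


lemma finite_eigenvalues_away_from_zero:
  assumes "\<epsilon> > 0"
  shows "finite {\<mu>. eigenvalue \<mu> \<and> \<epsilon> \<le> cmod \<mu>}"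
proof (rule ccontr)
  assume "infinite {\<mu>. eigenvalue \<mu> \<and> \<epsilon> \<le> cmod \<mu>}"
  then obtain \<mu> :: "nat \<Rightarrow> complex"
    where "inj \<mu>" and "range \<mu> \<subseteq> {\<mu>. eigenvalue \<mu> \<and> \<epsilon> \<le> cmod \<mu>}"
    using infinite_countable_subset by blast
  then have \<mu>: "\<And>n. eigenvalue (\<mu> n)" "\<And>n. \<epsilon> \<le> cmod (\<mu> n)" by auto
  have "\<forall>n. \<exists>e. e \<in> F \<and> N e = 1 \<and> (\<forall>x. \<psi> x * e x = \<mu> n * e x)"
    using \<mu>(1) unfolding eigenvalue_def by blast
  from choice[OF this] obtain e where "\<forall>n. e n \<in> F \<and> N (e n) = 1 \<and> (\<forall>x. \<psi> x * e n x = \<mu> n * e n x)"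
    by (rule exE)
  then have e: "\<And>n. e n \<in> F" "\<And>n. N (e n) = 1"
    and eigen: "\<And>n. (\<lambda>x. \<psi> x * e n x) = (\<lambda>x. \<mu> n * e n x)"
    by auto
  obtain r g where r: "strict_mono r" and g: "g \<in> F"
    and lim: "(\<lambda>k. N (\<lambda>x. \<psi> x * e (r k) x - g x)) \<longlonglongrightarrow> 0"
    using convergent_subseq[of e] e by auto
  have "g x = 0" for x
  proof -
    \<comment> \<open>e n x \<noteq> 0 forces \<psi> x = \<mu> n, so this happens for at most one n\<close>
    have "inj_on (\<mu> \<circ> r) {k. e (r k) x \<noteq> 0}"
      using inj_compose[OF \<open>inj \<mu>\<close> strict_mono_imp_inj_on[OF r]] by (rule inj_on_subset) simp
    moreover have "(\<mu> \<circ> r) ` {k. e (r k) x \<noteq> 0} \<subseteq> {\<psi> x}"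
    proof (clarsimp)
      fix k assume "e (r k) x \<noteq> 0"
      then show "\<mu> (r k) = \<psi> x" using fun_cong[OF eigen[of "r k"], of x] by simp
    qed
    ultimately have "finite {k. e (r k) x \<noteq> 0}"
      using finite_imageD finite_subset by blast
    then have "\<forall>\<^sub>F k in sequentially. \<psi> x * e (r k) x = 0"
      by (simp add: eventually_cofinite flip: cofinite_eq_sequentially)
    then have "(\<lambda>k. \<psi> x * e (r k) x) \<longlonglongrightarrow> 0" by (rule tendsto_eventually)
    moreover have "(\<lambda>k. \<psi> x * e (r k) x) \<longlonglongrightarrow> g x"
      using pointwise_limit[OF mult_mem[OF e(1)] g lim] .
    ultimately show "g x = 0" by (rule LIMSEQ_unique[symmetric])
  qed
  then have "N (\<lambda>x. \<psi> x * e (r k) x - g x) = cmod (\<mu> (r k))" for k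
    using N_scale[OF e(1), of "\<mu> (r k)" "r k"] e(2) by (simp add: eigen)
  then have "(\<lambda>k. cmod (\<mu> (r k))) \<longlonglongrightarrow> 0" using lim by simp
  then have "\<epsilon> \<le> 0" using LIMSEQ_le_const \<mu>(2) by blast
  then show False using \<open>\<epsilon> > 0\<close> by simp
qed

lemma constant_if_connected:
  assumes "connected (UNIV :: 'a set)" "one_independent F" "continuous_on UNIV \<psi>"
  shows "\<exists>c. \<forall>x. \<psi> x = c"
proof (rule ccontr)
  assume nonconst: "\<nexists>c. \<forall>x. \<psi> x = c"
  then obtain x0 where "\<psi> x0 \<noteq> 0" by blast
  define \<epsilon> where "\<epsilon> = cmod (\<psi> x0) / 2"
  have "\<epsilon> > 0" using \<open>\<psi> x0 \<noteq> 0\<close> by (simp add: \<epsilon>_def)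
  have "\<psi> x0 islimpt range \<psi>"
    using connected_imp_perfect[OF connected_continuous_image[OF assms(3,1)]] nonconst by blast
  then have "infinite (range \<psi> \<inter> ball (\<psi> x0) \<epsilon>)"
    using \<open>\<epsilon> > 0\<close> unfolding islimpt_eq_infinite_ball by blast
  moreover have "range \<psi> \<inter> ball (\<psi> x0) \<epsilon> \<subseteq> {\<mu>. eigenvalue \<mu> \<and> \<epsilon> \<le> cmod \<mu>}"
  proof
    fix \<mu> assume "\<mu> \<in> range \<psi> \<inter> ball (\<psi> x0) \<epsilon>"
    then obtain x where "\<mu> = \<psi> x" and "cmod (\<psi> x0 - \<mu>) < \<epsilon>" by (auto simp: dist_norm)
    then have "\<epsilon> \<le> cmod \<mu>"
      using norm_triangle_sub[of "\<psi> x0" \<mu>] by (simp add: \<epsilon>_def)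
    moreover obtain f where "f \<in> F" "f x \<noteq> 0"
      using \<open>one_independent F\<close> unfolding one_independent_def by blast
    moreover have "\<psi> x \<noteq> 0" using \<open>\<epsilon> \<le> cmod \<mu>\<close> \<open>\<mu> = \<psi> x\<close> \<open>\<epsilon> > 0\<close> by auto
    ultimately show "\<mu> \<in> {\<mu>. eigenvalue \<mu> \<and> \<epsilon> \<le> cmod \<mu>}"
      using value_is_eigenvalue[of x f] \<open>\<mu> = \<psi> x\<close> by auto
  qed
  ultimately show False
    using finite_eigenvalues_away_from_zero[OF \<open>\<epsilon> > 0\<close>] finite_subset by blast
qed

end

theorem lemma4p3:
  fixes F :: "('a::t2_space \<Rightarrow> complex) set" and N :: "('a \<Rightarrow> complex) \<Rightarrow> real"
    and \<omega> :: "'a \<Rightarrow> complex"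
  assumes "connected (UNIV :: 'a set)"
    and "banach_space_of_cfuns F N"
    and "infinite_dimensional F"
    and "one_independent F"
    and "\<forall>T. bounded_op_on F N T \<longrightarrow>
           (\<exists>(lam::complex) K. compact_op_on F N K \<and> (\<forall>f\<in>F. T f = (\<lambda>x. lam * f x + K f x)))"
    and "multiplier F N \<omega>"
  shows "\<exists>c. \<forall>x. \<omega> x = c"
proof -
  interpret cfun_normed_space F N
    using assms(2) unfolding banach_space_of_cfuns_def by unfold_locales auto
  obtain lam K where "compact_op_on F N K" and decomp: "\<forall>f\<in>F. (\<lambda>x. \<omega> x * f x) = (\<lambda>x. lam * f x + K f x)"
    using assms(5) multiplier_bounded_op[OF assms(6)] by blast
  have "compact_op_on F N (\<lambda>f x. (\<omega> x - lam) * f x)"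
  proof (rule compact_op_on_cong[OF \<open>compact_op_on F N K\<close>])
    fix f assume "f \<in> F"
    show "(\<lambda>x. (\<omega> x - lam) * f x) = K f"
      using decomp \<open>f \<in> F\<close> by (auto simp: fun_eq_iff algebra_simps)
  qed
  then interpret compact_multiplier F N "\<lambda>x. \<omega> x - lam" by unfold_locales
  have "continuous_on UNIV \<omega>"
    using multiplier_continuous assms(2,4,6)
    unfolding banach_space_of_cfuns_def cfun_subspace_def multiplier_def by blast
  then have "continuous_on UNIV (\<lambda>x. \<omega> x - lam)" by (intro continuous_intros)
  then obtain c where "\<forall>x. \<omega> x - lam = c" using constant_if_connected assms(1,4) by blast
  then show ?thesis by (metis diff_eq_eq)
qed

end
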